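(* Let $S$ be a semigroup with a regular element $a$, and let $b\in S$ satisfy $a=aba$. Then for any set $U\subseteq S$ with $S=US^1$ we have $\mathbf{r}_S(a)=\langle\{(bau,u)\mid u\in U\}\rangle$. Consequently, $\mathbf{r}_S(a)$ is finitely generated if and only if $S=US^1$ for some finite set $U\subseteq S$.
   Context: $S^1$ is $S$ if $S$ is a monoid and otherwise $S$ with an identity adjoined. $\mathbf{r}_S(a)=\{(s,t)\in S\times S\mid as=at\}$. For $X\subseteq S\times S$, $\langle X\rangle$ denotes the smallest right congruence on $S$ containing $X$; a right congruence is finitely generated if it equals $\langle X\rangle$ for some finite $X$. *)

theory Defs
  imports Main
begin

text \<open>The semigroup S is the whole (arbitrary) type 'a of class semigroup_mult.\<close>

definition right_congruence :: "('a::semigroup_mult \<times> 'a) set \<Rightarrow> bool" where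
  "right_congruence R \<longleftrightarrow> equiv UNIV R \<and> (\<forall>s t u. (s, t) \<in> R \<longrightarrow> (s * u, t * u) \<in> R)"

definition gen_rcong :: "('a::semigroup_mult \<times> 'a) set \<Rightarrow> ('a \<times> 'a) set" where
  "gen_rcong X = \<Inter> {R. right_congruence R \<and> X \<subseteq> R}"

definition fin_gen_rcong :: "('a::semigroup_mult \<times> 'a) set \<Rightarrow> bool" where
  "fin_gen_rcong R \<longleftrightarrow> (\<exists>X. finite X \<and> R = gen_rcong X)"

definition r_ann :: "'a::semigroup_mult \<Rightarrow> ('a \<times> 'a) set" where
  "r_ann a = {(s, t). a * s = a * t}"

definition right_S1 :: "'a::semigroup_mult set \<Rightarrow> 'a set" where
  "right_S1 U = U \<union> {u * s | u s. u \<in> U}"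

definition regular_elt :: "'a::semigroup_mult \<Rightarrow> bool" where
  "regular_elt a \<longleftrightarrow> (\<exists>x. a = a * x * a)"

end

theory Submission
  imports Defs
begin

text \<open>Since \<open>aba = a\<close>, left multiplication by \<open>ba\<close> does not change the \<open>a\<close>-value of an element,
  so \<open>(s, bas) \<in> r\<^sub>S(a)\<close> for every \<open>s\<close>; conversely, \<open>as = at\<close> gives \<open>bas = bat\<close>. Hence \<open>r\<^sub>S(a)\<close> is
  generated by all pairs \<open>(bas, s)\<close>, and right compatibility reduces these to \<open>s\<close> ranging over any
  \<open>U\<close> with \<open>S = US\<^sup>1\<close>. If instead \<open>r\<^sub>S(a)\<close> is generated by a finite \<open>X\<close>, the Rees congruence of the
  right ideal \<open>VS\<^sup>1\<close>, \<open>V\<close> the finite set of entries of \<open>X\<close>, contains \<open>X\<close> and hence every pair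
  \<open>(s, bas)\<close>; so each \<open>s\<close> lies in \<open>VS\<^sup>1\<close> or in \<open>bS\<close>, i.e. \<open>S = (V \<union> {b})S\<^sup>1\<close>.\<close>

lemma gen_rcong_least: "right_congruence R \<Longrightarrow> X \<subseteq> R \<Longrightarrow> gen_rcong X \<subseteq> R"
  unfolding gen_rcong_def by blast

lemma subset_gen_rcong: "X \<subseteq> gen_rcong X"
  unfolding gen_rcong_def by blast

lemma right_congruence_Inter:
  assumes "\<And>R. R \<in> \<R> \<Longrightarrow> right_congruence R"
  shows "right_congruence (\<Inter> \<R>)"
  using assms unfolding right_congruence_def equiv_def refl_on_def sym_def trans_def
  by (simp only: subset_UNIV UNIV_Times_UNIV simp_thms) blast

lemma right_congruence_gen_rcong: "right_congruence (gen_rcong X)"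
  unfolding gen_rcong_def by (rule right_congruence_Inter) blast

lemma right_congruence_r_ann: "right_congruence (r_ann a)"
  unfolding right_congruence_def r_ann_def equiv_def refl_on_def sym_def trans_def
  by (auto simp: mult.assoc[symmetric])

lemma right_congruence_Rees:
  assumes "\<And>x w. x \<in> V \<Longrightarrow> x * w \<in> V"
  shows "right_congruence (Id \<union> V \<times> V)"
  using assms unfolding right_congruence_def equiv_def refl_on_def sym_def trans_def by auto

lemma right_S1_mult_closed: "x \<in> right_S1 U \<Longrightarrow> x * w \<in> right_S1 U"
  unfolding right_S1_def by (auto simp: mult.assoc) metis

lemma left_mult_pair_in_gen_rcong:
  fixes c :: "'a::semigroup_mult"
  assumes "right_S1 U = UNIV"
  shows "(c * x, x) \<in> gen_rcong {(c * u, u) | u. u \<in> U}"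
proof -
  let ?G = "gen_rcong {(c * u, u) | u. u \<in> U}"
  have gen: "(c * u, u) \<in> ?G" if "u \<in> U" for u
    by (rule subsetD[OF subset_gen_rcong]) (use that in blast)
  have "right_congruence ?G" by (rule right_congruence_gen_rcong)
  then have compat: "(s * v, t * v) \<in> ?G" if "(s, t) \<in> ?G" for s t v
    using that unfolding right_congruence_def by blast
  have "x \<in> right_S1 U" using assms by simp
  then consider "x \<in> U" | u v where "u \<in> U" "x = u * v"
    unfolding right_S1_def by blast
  then show ?thesis
  proof cases
    case 1
    then show ?thesis by (rule gen)
  next
    case 2
    from compat[OF gen[OF 2(1)], of v] show ?thesis
      using 2(2) by (simp add: mult.assoc)
  qed
qed

lemma r_ann_eq_gen_rcong:
  fixes a b :: "'a::semigroup_mult"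
  assumes aba: "a = a * b * a" and U: "right_S1 U = UNIV"
  shows "r_ann a = gen_rcong {(b * a * u, u) | u. u \<in> U}" (is "_ = ?G")
proof
  show "?G \<subseteq> r_ann a"
  proof (rule gen_rcong_least[OF right_congruence_r_ann])
    show "{(b * a * u, u) | u. u \<in> U} \<subseteq> r_ann a"
      using aba by (auto simp: r_ann_def mult.assoc[symmetric])
  qed
  have "right_congruence ?G" by (rule right_congruence_gen_rcong)
  then have "sym ?G" "trans ?G" by (simp_all add: right_congruence_def equiv_def)
  show "r_ann a \<subseteq> ?G"
  proof clarify
    fix s t assume "(s, t) \<in> r_ann a"
    then have "b * a * s = b * a * t" by (simp add: r_ann_def mult.assoc)
    have "(b * a * s, s) \<in> ?G" "(b * a * t, t) \<in> ?G"
      by (rule left_mult_pair_in_gen_rcong[OF U])+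
    from \<open>sym ?G\<close> \<open>(b * a * s, s) \<in> ?G\<close> have "(s, b * a * t) \<in> ?G"
      unfolding \<open>b * a * s = b * a * t\<close> by (rule symD)
    with \<open>trans ?G\<close> \<open>(b * a * t, t) \<in> ?G\<close> show "(s, t) \<in> ?G"
      by (blast dest: transD)
  qed
qed

lemma right_S1_cover_of_gen_rcong_eq_r_ann:
  fixes a b :: "'a::semigroup_mult"
  assumes aba: "a = a * b * a" and X: "r_ann a = gen_rcong X"
  shows "right_S1 (insert b (Field X)) = UNIV"
proof -
  let ?V = "right_S1 (Field X)"
  have "gen_rcong X \<subseteq> Id \<union> ?V \<times> ?V"
  proof (rule gen_rcong_least)
    show "right_congruence (Id \<union> ?V \<times> ?V)"
      by (intro right_congruence_Rees right_S1_mult_closed)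
    show "X \<subseteq> Id \<union> ?V \<times> ?V"
      by (auto simp: right_S1_def intro: FieldI1 FieldI2)
  qed
  moreover have "(s, b * a * s) \<in> r_ann a" for s
    using aba by (simp add: r_ann_def mult.assoc[symmetric])
  ultimately have "s = b * (a * s) \<or> s \<in> ?V" for s
    using X by (auto simp: mult.assoc)
  then show ?thesis
    unfolding right_S1_def by blast
qed

theorem mainTheorem12:
  fixes a b :: "'a::semigroup_mult"
  assumes "regular_elt a"
    and "a = a * b * a"
  shows "(\<forall>U. right_S1 U = UNIV \<longrightarrow> r_ann a = gen_rcong {(b * a * u, u) | u. u \<in> U})
         \<and> (fin_gen_rcong (r_ann a) \<longleftrightarrow> (\<exists>U :: 'a set. finite U \<and> right_S1 U = UNIV))"
proof (intro conjI allI impI iffI)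
  show "r_ann a = gen_rcong {(b * a * u, u) | u. u \<in> U}" if "right_S1 U = UNIV" for U
    using r_ann_eq_gen_rcong[OF assms(2) that] .
next
  assume "\<exists>U :: 'a set. finite U \<and> right_S1 U = UNIV"
  then obtain U :: "'a set" where "finite U" "right_S1 U = UNIV" by blast
  moreover have "{(b * a * u, u) | u. u \<in> U} = (\<lambda>u. (b * a * u, u)) ` U" by blast
  ultimately show "fin_gen_rcong (r_ann a)"
    unfolding fin_gen_rcong_def using r_ann_eq_gen_rcong[OF assms(2)] by auto
next
  assume "fin_gen_rcong (r_ann a)"
  then obtain X where "finite X" "r_ann a = gen_rcong X" by (auto simp: fin_gen_rcong_def)
  then show "\<exists>U :: 'a set. finite U \<and> right_S1 U = UNIV"
    using right_S1_cover_of_gen_rcong_eq_r_ann[OF assms(2)]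
    by (intro exI[of _ "insert b (Field X)"]) (simp add: Field_def finite_Domain finite_Range)
qed

end
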